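(* Let $X$ be a compact metric space and $f\colon X\to X$ a continuous, topologically transitive map. Suppose there are $\delta>0$ and $\lambda>0$ such that: (i) (uniformly expanding) $d(fx,fy)\ge e^{\lambda}d(x,y)$ whenever $d(x,y)<\delta$; (ii) (locally onto) for every $x\in X$, $f(B(x,\delta))\supset B(fx,\delta)$. Then $(X,f)$ has the specification property at scale $\delta/(1-e^{-\lambda})$: there is $\tau\in\mathbb{N}$ such that for every finite collection $(x_1,n_1),\dots,(x_k,n_k)\in X\times\mathbb{N}$ there exist integers $0=T_1<T_2<\dots<T_k$ and $y\in X$ with $f^{T_i}(y)\in B_{n_i}(x_i,\delta/(1-e^{-\lambda}))$ for all $1\le i\le k$ and $T_i-(T_{i-1}+n_{i-1})\in[0,\tau]$ for all $2\le i\le k$.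
   Context: $B(x,r)$ is the open metric ball. $d_n(x,y)=\max\{d(f^kx,f^ky):0\le k<n\}$ and $B_n(x,\epsilon)=\{y: d_n(x,y)<\epsilon\}$ is the Bowen ball. *)

theory Defs
  imports "HOL-Analysis.Analysis"
begin

definition bowen_ball :: "('a::metric_space \<Rightarrow> 'a) \<Rightarrow> nat \<Rightarrow> 'a \<Rightarrow> real \<Rightarrow> 'a set" where
  "bowen_ball f n x eps = {y. \<forall>k<n. dist ((f ^^ k) x) ((f ^^ k) y) < eps}"

definition top_transitive :: "('a::topological_space \<Rightarrow> 'a) \<Rightarrow> bool" where
  "top_transitive f \<longleftrightarrow>
     (\<forall>U V. open U \<longrightarrow> open V \<longrightarrow> U \<noteq> {} \<longrightarrow> V \<noteq> {} \<longrightarrow>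
        (\<exists>n::nat. n > 0 \<and> (f ^^ n) ` U \<inter> V \<noteq> {}))"

text \<open>Specification property at scale eps; the orbit segments are indexed by i < k.\<close>
definition specification_at_scale :: "('a::metric_space \<Rightarrow> 'a) \<Rightarrow> real \<Rightarrow> bool" where
  "specification_at_scale f eps \<longleftrightarrow>
     (\<exists>\<tau>::nat. \<forall>(k::nat) (xs::nat \<Rightarrow> 'a) (ns::nat \<Rightarrow> nat).
        (\<exists>(T::nat \<Rightarrow> nat) y. T 0 = 0 \<and>
           (\<forall>i. 0 < i \<and> i < k \<longrightarrow> T (i - 1) < T i) \<and>
           (\<forall>i<k. (f ^^ T i) y \<in> bowen_ball f (ns i) (xs i) eps) \<and>
           (\<forall>i. 0 < i \<and> i < k \<longrightarrow>
               T (i - 1) + ns (i - 1) \<le> T i \<and> T i - (T (i - 1) + ns (i - 1)) \<le> \<tau>)))"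

end

theory Submission
  imports Defs
begin

text \<open>
  As \<open>f\<close> does not contract distances below \<open>\<delta>\<close> and maps every \<open>\<delta>\<close>-ball onto the
  \<open>\<delta>\<close>-ball around the image of its centre, a point \<open>z\<close> that is \<open>\<delta>\<close>-close to \<open>f\<^sup>n x\<close> can be
  pulled back along the orbit of \<open>x\<close>: some \<open>y\<close> with \<open>f\<^sup>n y = z\<close> shadows \<open>x\<close> for \<open>n\<close> steps,
  at every step at least as closely as \<open>z\<close> shadows \<open>f\<^sup>n x\<close>. By compactness, transitivity
  yields a uniform time \<open>\<tau>\<close> within which every \<open>\<delta>/2\<close>-ball reaches every other one. Two
  pull-backs then glue an orbit segment of any point to any prescribed point after a gap
  of at most \<open>\<tau>\<close>, and gluing the segments from the last one backwards gives specification
  even at the smaller scale \<open>\<delta>\<close>.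
\<close>

lemma top_transitive_uniform_transition_time:
  fixes f :: "'a::metric_space \<Rightarrow> 'a"
  assumes "compact (UNIV :: 'a set)" and "top_transitive f" and "r > 0"
  obtains \<tau> :: nat where
    "\<And>p q. \<exists>j w. 1 \<le> j \<and> j \<le> \<tau> \<and> dist p w < r \<and> dist ((f ^^ j) w) q < r"
proof -
  define U where "U n = (\<Union>j\<in>{1..n}. \<Union>w. ball w r \<times> ball ((f ^^ j) w) r)" for n
  have "open (U n)" for n
    unfolding U_def by (auto intro!: open_Times)
  moreover have "UNIV \<subseteq> (\<Union>n. U n)"
  proof
    fix pq :: "'a \<times> 'a"
    obtain p q where pq: "pq = (p, q)" by fastforce
    obtain n where "n > 0" and "(f ^^ n) ` ball p r \<inter> ball q r \<noteq> {}"
      using assms(2,3) unfolding top_transitive_def by (metis centre_in_ball empty_iff open_ball)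
    then obtain w where "w \<in> ball p r" "(f ^^ n) w \<in> ball q r"
      by auto
    then have "pq \<in> ball w r \<times> ball ((f ^^ n) w) r"
      unfolding pq by (simp add: dist_commute)
    moreover have "n \<in> {1..n}"
      using \<open>n > 0\<close> by simp
    ultimately show "pq \<in> (\<Union>n. U n)"
      unfolding U_def by blast
  qed
  moreover have "compact (UNIV :: ('a \<times> 'a) set)"
    using compact_Times[OF assms(1) assms(1)] by simp
  ultimately obtain N where "finite N" and cover: "UNIV \<subseteq> (\<Union>n\<in>N. U n)"
    by (metis compactE_image)
  have mono: "U m \<subseteq> U n" if "m \<le> n" for m n
    unfolding U_def using that by (intro UN_mono) auto
  show ?thesis
  proof (rule that)
    fix p q
    obtain m where "m \<in> N" and "(p, q) \<in> U m"
      using cover by blast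
    moreover have "m \<le> Max (insert 0 N)"
      using \<open>finite N\<close> \<open>m \<in> N\<close> by simp
    ultimately have "(p, q) \<in> U (Max (insert 0 N))"
      using mono by blast
    then show "\<exists>j w. 1 \<le> j \<and> j \<le> Max (insert 0 N) \<and> dist p w < r \<and> dist ((f ^^ j) w) q < r"
      unfolding U_def by (auto simp: dist_commute)
  qed
qed

text \<open>The gaps are at least 1, so the starting times increase strictly even when some
  segment lengths \<open>ns i\<close> are 0.\<close>

lemma glued_orbit_exists:
  fixes f :: "'a \<Rightarrow> 'a" and xs :: "nat \<Rightarrow> 'a" and ns :: "nat \<Rightarrow> nat"
  assumes glue: "\<And>x n z. \<exists>y j. 1 \<le> j \<and> j \<le> \<tau> \<and> y \<in> S n x \<and> (f ^^ (j + n)) y = z"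
  shows "\<exists>T y. T 0 = 0 \<and>
    (\<forall>i. Suc i < k \<longrightarrow> T i + ns i < T (Suc i) \<and> T (Suc i) - (T i + ns i) \<le> \<tau>) \<and>
    (\<forall>i<k. (f ^^ T i) y \<in> S (ns i) (xs i))"
proof (induction k arbitrary: xs ns)
  case 0
  then show ?case by auto
next
  case (Suc k)
  obtain T' y' where T'0: "T' 0 = 0"
    and gaps': "\<forall>i. Suc i < k \<longrightarrow> T' i + ns (Suc i) < T' (Suc i) \<and> T' (Suc i) - (T' i + ns (Suc i)) \<le> \<tau>"
    and segments': "\<forall>i<k. (f ^^ T' i) y' \<in> S (ns (Suc i)) (xs (Suc i))"
    using Suc.IH[where xs = "xs \<circ> Suc" and ns = "ns \<circ> Suc"] by auto
  obtain y j where j: "1 \<le> j" "j \<le> \<tau>" and "y \<in> S (ns 0) (xs 0)"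
    and y: "(f ^^ (j + ns 0)) y = y'"
    using glue by blast
  define T where "T i = (case i of 0 \<Rightarrow> 0 | Suc m \<Rightarrow> T' m + (j + ns 0))" for i
  have "(f ^^ T (Suc i)) y = (f ^^ T' i) y'" for i
    using y by (simp add: T_def funpow_add)
  then have "\<forall>i<Suc k. (f ^^ T i) y \<in> S (ns i) (xs i)"
    using segments' \<open>y \<in> S (ns 0) (xs 0)\<close> by (auto simp: T_def less_Suc_eq_0_disj)
  moreover have "T i + ns i < T (Suc i) \<and> T (Suc i) - (T i + ns i) \<le> \<tau>" if "Suc i < Suc k" for i
    using that j T'0 gaps' by (cases i) (auto simp: T_def)
  ultimately show ?case
    by (intro exI[of _ T] exI[of _ y]) (auto simp: T_def)
qed

lemma bowen_ball_mono:
  assumes "eps \<le> eps'"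
  shows "bowen_ball f n x eps \<subseteq> bowen_ball f n x eps'"
  using assms unfolding bowen_ball_def by (auto intro: less_le_trans)

lemma specification_at_scale_mono:
  assumes "specification_at_scale f eps" and "eps \<le> eps'"
  shows "specification_at_scale f eps'"
  using assms(1) unfolding specification_at_scale_def
  by (elim ex_forward all_forward conj_forward) (use bowen_ball_mono[OF assms(2)] in auto)

locale noncontracting_locally_onto =
  fixes f :: "'a::metric_space \<Rightarrow> 'a" and delta :: real
  assumes noncontracting: "\<And>x y. dist x y < delta \<Longrightarrow> dist x y \<le> dist (f x) (f y)"
    and locally_onto: "\<And>x. ball (f x) delta \<subseteq> f ` ball x delta"
begin

lemma funpow_shadowing_preimage:
  assumes "dist ((f ^^ n) x) z < delta"
  shows "\<exists>y. (f ^^ n) y = z \<and> (\<forall>k\<le>n. dist ((f ^^ k) x) ((f ^^ k) y) \<le> dist ((f ^^ n) x) z)"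
  using assms
proof (induction n arbitrary: x)
  case 0
  then show ?case by auto
next
  case (Suc n)
  have shift: "(f ^^ Suc n) x = (f ^^ n) (f x)"
    by (simp add: funpow_swap1)
  obtain y' where y': "(f ^^ n) y' = z"
    and close': "\<And>k. k \<le> n \<Longrightarrow> dist ((f ^^ k) (f x)) ((f ^^ k) y') \<le> dist ((f ^^ Suc n) x) z"
    using Suc.IH[of "f x"] Suc.prems shift by auto
  have "dist (f x) y' \<le> dist ((f ^^ Suc n) x) z"
    using close'[of 0] by simp
  then have "y' \<in> ball (f x) delta"
    using Suc.prems by simp
  then obtain y where "dist x y < delta" and "f y = y'"
    using locally_onto[of x] by auto
  with noncontracting have first: "dist x y \<le> dist (f x) y'"
    by blast
  have "dist ((f ^^ k) x) ((f ^^ k) y) \<le> dist ((f ^^ Suc n) x) z" if "k \<le> Suc n" for k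
  proof (cases k)
    case 0
    then show ?thesis using first close'[of 0] by simp
  next
    case (Suc m)
    then show ?thesis
      using close'[of m] \<open>f y = y'\<close> that by (simp add: funpow_swap1)
  qed
  moreover have "(f ^^ Suc n) y = z"
    using \<open>f y = y'\<close> y' by (simp add: funpow_swap1)
  ultimately show ?case by blast
qed

lemma orbit_gluing:
  assumes transition: "\<And>p q. \<exists>j w. 1 \<le> j \<and> j \<le> \<tau> \<and> dist p w < delta / 2 \<and> dist ((f ^^ j) w) q < delta / 2"
  shows "\<exists>y j. 1 \<le> j \<and> j \<le> \<tau> \<and> y \<in> bowen_ball f n x delta \<and> (f ^^ (j + n)) y = z"
proof -
  obtain j w where j: "1 \<le> j" "j \<le> \<tau>"
    and w: "dist ((f ^^ n) x) w < delta / 2" "dist ((f ^^ j) w) z < delta / 2"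
    using transition by blast
  moreover have "dist ((f ^^ j) w) z < delta"
    using w zero_le_dist[of "(f ^^ n) x" w] by linarith
  ultimately obtain w' where w': "(f ^^ j) w' = z"
    and "\<forall>k\<le>j. dist ((f ^^ k) w) ((f ^^ k) w') \<le> dist ((f ^^ j) w) z"
    using funpow_shadowing_preimage by blast
  then have "dist w w' \<le> dist ((f ^^ j) w) z"
    by (metis funpow_0 le0)
  then have "dist ((f ^^ n) x) w' < delta"
    using w dist_triangle[of "(f ^^ n) x" w' w] by linarith
  then obtain y where y: "(f ^^ n) y = w'"
    and close: "\<forall>k\<le>n. dist ((f ^^ k) x) ((f ^^ k) y) \<le> dist ((f ^^ n) x) w'"
    using funpow_shadowing_preimage by blast
  have "dist ((f ^^ k) x) ((f ^^ k) y) < delta" if "k < n" for k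
  proof -
    have "dist ((f ^^ k) x) ((f ^^ k) y) \<le> dist ((f ^^ n) x) w'"
      using close that by simp
    then show ?thesis
      using \<open>dist ((f ^^ n) x) w' < delta\<close> by linarith
  qed
  then have "y \<in> bowen_ball f n x delta"
    by (simp add: bowen_ball_def)
  moreover have "(f ^^ (j + n)) y = z"
    using y w' by (simp add: funpow_add)
  ultimately show ?thesis
    using j by blast
qed

lemma specification_at_scale_delta:
  assumes "compact (UNIV :: 'a set)" and "top_transitive f" and "delta > 0"
  shows "specification_at_scale f delta"
proof -
  obtain \<tau> where "\<And>p q. \<exists>j w. 1 \<le> j \<and> j \<le> \<tau> \<and> dist p w < delta / 2 \<and> dist ((f ^^ j) w) q < delta / 2"
    using top_transitive_uniform_transition_time[OF assms(1,2)] \<open>delta > 0\<close> half_gt_zero by blast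
  note glue = orbit_gluing[OF this]
  have segments: "\<exists>T y. T 0 = 0 \<and>
      (\<forall>i. 0 < i \<and> i < k \<longrightarrow> T (i - 1) < T i) \<and>
      (\<forall>i<k. (f ^^ T i) y \<in> bowen_ball f (ns i) (xs i) delta) \<and>
      (\<forall>i. 0 < i \<and> i < k \<longrightarrow> T (i - 1) + ns (i - 1) \<le> T i \<and> T i - (T (i - 1) + ns (i - 1)) \<le> \<tau>)"
    for k :: nat and xs :: "nat \<Rightarrow> 'a" and ns :: "nat \<Rightarrow> nat"
  proof -
    obtain T y where "T 0 = 0"
      and gaps: "\<forall>i. Suc i < k \<longrightarrow> T i + ns i < T (Suc i) \<and> T (Suc i) - (T i + ns i) \<le> \<tau>"
      and "\<forall>i<k. (f ^^ T i) y \<in> bowen_ball f (ns i) (xs i) delta"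
      using glued_orbit_exists[where S = "\<lambda>n x. bowen_ball f n x delta", OF glue] by blast
    moreover have "T (i - 1) < T i \<and> T (i - 1) + ns (i - 1) \<le> T i \<and> T i - (T (i - 1) + ns (i - 1)) \<le> \<tau>"
      if "0 < i" "i < k" for i
      using gaps[rule_format, of "i - 1"] that by simp
    ultimately show ?thesis
      by (intro exI[of _ T] exI[of _ y]) simp
  qed
  show ?thesis
    unfolding specification_at_scale_def by (rule exI[of _ \<tau>], intro allI, rule segments)
qed

end

theorem proposition5p13:
  fixes f :: "'a::metric_space \<Rightarrow> 'a" and delta lam :: real
  assumes "compact (UNIV :: 'a set)"
    and "continuous_on UNIV f"
    and "top_transitive f"
    and "delta > 0" and "lam > 0"
    and "\<And>x y. dist x y < delta \<Longrightarrow> dist (f x) (f y) \<ge> exp lam * dist x y"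
    and "\<And>x. ball (f x) delta \<subseteq> f ` ball x delta"
  shows "specification_at_scale f (delta / (1 - exp (- lam)))"
proof -
  have "dist x y \<le> dist (f x) (f y)" if "dist x y < delta" for x y :: 'a
  proof -
    have "dist x y \<le> exp lam * dist x y"
      using \<open>lam > 0\<close> by (simp add: mult_le_cancel_right1)
    then show ?thesis
      using assms(6)[OF that] by linarith
  qed
  with assms(7) have "noncontracting_locally_onto f delta"
    by unfold_locales
  then have "specification_at_scale f delta"
    using assms(1,3,4) by (rule noncontracting_locally_onto.specification_at_scale_delta)
  moreover have "delta \<le> delta / (1 - exp (- lam))"
    using \<open>delta > 0\<close> \<open>lam > 0\<close> by (simp add: le_divide_eq)
  ultimately show ?thesis
    by (rule specification_at_scale_mono)
qed

end
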